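(* Let $N$ be a smooth positive function on an open interval of $r$-values, let $a$ be a constant such that $F(r)=\int_a^r\frac{1}{N(\mu)}\,\mathrm{d}\mu$ is defined and has a smooth inverse $F^{-1}$ defined on an open interval $I$, and set $b_1(t)=N(F^{-1}(t))$, $b_2(t)=F^{-1}(t)$ for $t\in I$, with $b_2>0$. Consider the $(2+1)$-dimensional Lorentzian multiply warped product $I\times{}_{b_1}F_1\times{}_{b_2}F_2$ with $F_1,F_2$ one-dimensional Riemannian manifolds with coordinates $x,\phi$ and metric $\mathrm{d}s^2=-\mathrm{d}t^2+b_1^2(t)\,\mathrm{d}x^2+b_2^2(t)\,\mathrm{d}\phi^2$. Then this space-time is Einstein with Ricci curvature $\lambda$ if and only if the square lapse function satisfies $N^2(r)=\frac{\lambda}{2}r^2+c_2$ for some constant $c_2$ (that is, $N^2(r)=\frac{\lambda}{2}r^2+c_1r+c_2$ with $c_1=0$).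
   Context: A pseudo-Riemannian manifold $(M,h)$ is Einstein with Ricci curvature $\lambda$ if $\mathrm{Ric}=\lambda h$. *)

theory Defs
  imports "HOL-Analysis.Analysis"
begin

definition smooth_on :: "real set \<Rightarrow> (real \<Rightarrow> real) \<Rightarrow> bool" where
  "smooth_on S f \<longleftrightarrow> (\<forall>k. \<forall>x\<in>S. ((deriv ^^ k) f) differentiable (at x))"

definition pd :: "3 \<Rightarrow> (real^3 \<Rightarrow> real) \<Rightarrow> real^3 \<Rightarrow> real" where
  "pd i f p = deriv (\<lambda>s. f (p + s *\<^sub>R axis i 1)) 0"

definition christoffel :: "(real^3 \<Rightarrow> real^3^3) \<Rightarrow> real^3 \<Rightarrow> 3 \<Rightarrow> 3 \<Rightarrow> 3 \<Rightarrow> real" where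
  "christoffel g p k i j =
     (1/2) * (\<Sum>l\<in>UNIV. matrix_inv (g p) $ k $ l *
        (pd i (\<lambda>q. g q $ j $ l) p + pd j (\<lambda>q. g q $ i $ l) p - pd l (\<lambda>q. g q $ i $ j) p))"

definition ricci :: "(real^3 \<Rightarrow> real^3^3) \<Rightarrow> real^3 \<Rightarrow> 3 \<Rightarrow> 3 \<Rightarrow> real" where
  "ricci g p i j =
     (\<Sum>k\<in>UNIV. pd k (\<lambda>q. christoffel g q k i j) p - pd j (\<lambda>q. christoffel g q k i k) p
        + (\<Sum>l\<in>UNIV. christoffel g p k k l * christoffel g p l i j
                     - christoffel g p k j l * christoffel g p l i k))"

definition einstein_on :: "(real^3) set \<Rightarrow> (real^3 \<Rightarrow> real^3^3) \<Rightarrow> real \<Rightarrow> bool" where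
  "einstein_on U g lam \<longleftrightarrow> (\<forall>p\<in>U. \<forall>i j. ricci g p i j = lam * g p $ i $ j)"

text \<open>Metric -dt^2 + b1(t)^2 dx^2 + b2(t)^2 dphi^2 in coordinates (t,x,phi) = (p$1,p$2,p$3).\<close>
definition mwp_metric :: "(real \<Rightarrow> real) \<Rightarrow> (real \<Rightarrow> real) \<Rightarrow> real^3 \<Rightarrow> real^3^3" where
  "mwp_metric b1 b2 p = (\<chi> i j. if i \<noteq> j then 0 else if i = 1 then -1
        else if i = 2 then (b1 (p$1))\<^sup>2 else (b2 (p$1))\<^sup>2)"

definition signed_integral :: "real \<Rightarrow> real \<Rightarrow> (real \<Rightarrow> real) \<Rightarrow> real" where
  "signed_integral a r f = (if a \<le> r then integral {a..r} f else - integral {r..a} f)"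

end

theory Submission
  imports Defs "HOL-Complex_Analysis.Conformal_Mappings"
begin

(* For the diagonal metric -dt^2 + b1(t)^2 dx^2 + b2(t)^2 dphi^2 only the t-derivatives survive,
   and the Einstein equations Ric = lam g reduce to the three ODEs
     b1''/b1 + b2''/b2 = lam,   b1''/b1 + b1' b2'/(b1 b2) = lam,   b2''/b2 + b1' b2'/(b1 b2) = lam.
   Here b2 = F^-1 and b1 = N o F^-1 = b2', because (F^-1)' = N o F^-1. In the variable r = F^-1(t)
   the equations become (N N')' + N N'/r = lam (twice) and 2 N N'/r = lam. The last one says
   (N^2)' = lam r, i.e. N^2 = lam/2 r^2 + c2, and differentiating it gives (N N')' = lam/2,
   so it implies the other two. *)

lemma matrix_inv_eqI:
  fixes A B :: "real^'n^'n"
  assumes "A ** B = mat 1" "B ** A = mat 1"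
  shows "matrix_inv A = B"
proof -
  have "A ** matrix_inv A = mat 1 \<and> matrix_inv A ** A = mat 1"
    unfolding matrix_inv_def by (rule someI_ex) (use assms in blast)
  then have "matrix_inv A = matrix_inv A ** (A ** B)" using assms by (simp add: matrix_mul_rid)
  also have "\<dots> = B" using \<open>_ \<and> _\<close> by (simp add: matrix_mul_assoc matrix_mul_lid)
  finally show ?thesis .
qed

definition diag3 :: "real \<Rightarrow> real \<Rightarrow> real \<Rightarrow> real^3^3" where
  "diag3 x y z = (\<chi> i j. if i \<noteq> j then 0 else if i = 1 then x else if i = 2 then y else z)"

lemma matrix_inv_diag3:
  assumes "x \<noteq> 0" "y \<noteq> 0" "z \<noteq> 0"
  shows "matrix_inv (diag3 x y z) = diag3 (1/x) (1/y) (1/z)"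
  by (rule matrix_inv_eqI)
    (use assms in \<open>auto simp: diag3_def matrix_matrix_mult_def vec_eq_iff sum_3 mat_def forall_3\<close>)

lemma pd_fun_of_first_coord:
  "pd i (\<lambda>q. f (q$1)) p = (if i = 1 then deriv f (p$1) else 0)"
proof (cases "i = 1")
  case True
  have "deriv (\<lambda>s. f ((p + s *\<^sub>R axis i 1)$1)) 0 = deriv (\<lambda>s. f (s + p$1)) 0"
    using True by (simp add: axis_def add.commute)
  also have "\<dots> = deriv f (p$1)"
    unfolding deriv_def using DERIV_shift[of f _ 0 "p$1"] by simp
  finally show ?thesis using True by (simp add: pd_def)
qed (simp add: pd_def axis_def)

definition mwp_matrix :: "(real \<Rightarrow> real) \<Rightarrow> (real \<Rightarrow> real) \<Rightarrow> real \<Rightarrow> real^3^3" where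
  "mwp_matrix b1 b2 t = diag3 (-1) ((b1 t)\<^sup>2) ((b2 t)\<^sup>2)"

lemma mwp_metric_eq_mwp_matrix: "mwp_metric b1 b2 p = mwp_matrix b1 b2 (p$1)"
  by (simp add: mwp_metric_def mwp_matrix_def diag3_def)

definition mwp_christoffel :: "(real \<Rightarrow> real) \<Rightarrow> (real \<Rightarrow> real) \<Rightarrow> 3 \<Rightarrow> 3 \<Rightarrow> 3 \<Rightarrow> real \<Rightarrow> real" where
  "mwp_christoffel b1 b2 k i j t = (1/2) * (\<Sum>l\<in>UNIV. matrix_inv (mwp_matrix b1 b2 t) $ k $ l *
     ((if i = 1 then deriv (\<lambda>s. mwp_matrix b1 b2 s $ j $ l) t else 0)
    + (if j = 1 then deriv (\<lambda>s. mwp_matrix b1 b2 s $ i $ l) t else 0)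
    - (if l = 1 then deriv (\<lambda>s. mwp_matrix b1 b2 s $ i $ j) t else 0)))"

lemma christoffel_mwp_metric:
  "christoffel (mwp_metric b1 b2) p k i j = mwp_christoffel b1 b2 k i j (p$1)"
  unfolding christoffel_def mwp_christoffel_def mwp_metric_eq_mwp_matrix
  by (simp add: pd_fun_of_first_coord[of _ "\<lambda>s. mwp_matrix b1 b2 s $ _ $ _"])

lemma ricci_mwp_metric:
  "ricci (mwp_metric b1 b2) p i j =
    (\<Sum>k\<in>UNIV. (if k = 1 then deriv (mwp_christoffel b1 b2 k i j) (p$1) else 0)
       - (if j = 1 then deriv (mwp_christoffel b1 b2 k i k) (p$1) else 0)
       + (\<Sum>l\<in>UNIV. mwp_christoffel b1 b2 k k l (p$1) * mwp_christoffel b1 b2 l i j (p$1)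
                    - mwp_christoffel b1 b2 k j l (p$1) * mwp_christoffel b1 b2 l i k (p$1)))"
  unfolding ricci_def christoffel_mwp_metric
  by (simp add: pd_fun_of_first_coord[of _ "mwp_christoffel b1 b2 _ _ _"])

lemma has_real_derivative_square:
  "(f has_real_derivative f') (at t) \<Longrightarrow> ((\<lambda>s. (f s)\<^sup>2) has_real_derivative 2 * f t * f') (at t)"
  by (auto intro!: derivative_eq_intros)

locale mwp_twice_differentiable =
  fixes I :: "real set" and b1 b2 b1' b2' b1'' b2'' :: "real \<Rightarrow> real"
  assumes open_I: "open I"
    and b1_nonzero: "\<And>t. t \<in> I \<Longrightarrow> b1 t \<noteq> 0"
    and b2_nonzero: "\<And>t. t \<in> I \<Longrightarrow> b2 t \<noteq> 0"
    and b1_deriv: "\<And>t. t \<in> I \<Longrightarrow> (b1 has_real_derivative b1' t) (at t)"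
    and b2_deriv: "\<And>t. t \<in> I \<Longrightarrow> (b2 has_real_derivative b2' t) (at t)"
    and b1'_deriv: "\<And>t. t \<in> I \<Longrightarrow> (b1' has_real_derivative b1'' t) (at t)"
    and b2'_deriv: "\<And>t. t \<in> I \<Longrightarrow> (b2' has_real_derivative b2'' t) (at t)"
begin

definition gamma :: "3 \<Rightarrow> 3 \<Rightarrow> 3 \<Rightarrow> real \<Rightarrow> real" where
  "gamma k i j t =
    (if k = 1 \<and> i = 2 \<and> j = 2 then b1 t * b1' t
     else if k = 1 \<and> i = 3 \<and> j = 3 then b2 t * b2' t
     else if k = 2 \<and> (i = 1 \<and> j = 2 \<or> i = 2 \<and> j = 1) then b1' t / b1 t
     else if k = 3 \<and> (i = 1 \<and> j = 3 \<or> i = 3 \<and> j = 1) then b2' t / b2 t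
     else 0)"

definition gamma_deriv :: "3 \<Rightarrow> 3 \<Rightarrow> 3 \<Rightarrow> real \<Rightarrow> real" where
  "gamma_deriv k i j t =
    (if k = 1 \<and> i = 2 \<and> j = 2 then (b1' t)\<^sup>2 + b1 t * b1'' t
     else if k = 1 \<and> i = 3 \<and> j = 3 then (b2' t)\<^sup>2 + b2 t * b2'' t
     else if k = 2 \<and> (i = 1 \<and> j = 2 \<or> i = 2 \<and> j = 1) then (b1'' t * b1 t - (b1' t)\<^sup>2) / (b1 t)\<^sup>2
     else if k = 3 \<and> (i = 1 \<and> j = 3 \<or> i = 3 \<and> j = 1) then (b2'' t * b2 t - (b2' t)\<^sup>2) / (b2 t)\<^sup>2
     else 0)"

lemma deriv_mwp_matrix:
  assumes t: "t \<in> I"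
  shows "deriv (\<lambda>s. mwp_matrix b1 b2 s $ j $ l) t =
    (if j = 2 \<and> l = 2 then 2 * b1 t * b1' t else if j = 3 \<and> l = 3 then 2 * b2 t * b2' t else 0)"
proof -
  consider "j = 2 \<and> l = 2" | "j = 3 \<and> l = 3" | "\<not> (j = 2 \<and> l = 2) \<and> \<not> (j = 3 \<and> l = 3)" by blast
  then show ?thesis
  proof cases
    case 1
    then show ?thesis using b1_deriv[OF t]
      by (simp add: mwp_matrix_def diag3_def DERIV_imp_deriv has_real_derivative_square)
  next
    case 2
    then show ?thesis using b2_deriv[OF t]
      by (simp add: mwp_matrix_def diag3_def DERIV_imp_deriv has_real_derivative_square)
  next
    case 3
    then have "(\<lambda>s. mwp_matrix b1 b2 s $ j $ l) = (\<lambda>s. if j \<noteq> l then 0 else if j = 1 then -1 else 0)"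
      by (auto simp: mwp_matrix_def diag3_def fun_eq_iff) (metis exhaust_3)+
    then show ?thesis using 3 by auto
  qed
qed

lemma mwp_christoffel_eq_gamma:
  assumes t: "t \<in> I"
  shows "mwp_christoffel b1 b2 k i j t = gamma k i j t"
proof -
  have "matrix_inv (mwp_matrix b1 b2 t) = diag3 (-1) (1/(b1 t)\<^sup>2) (1/(b2 t)\<^sup>2)"
    unfolding mwp_matrix_def using b1_nonzero[OF t] b2_nonzero[OF t] by (simp add: matrix_inv_diag3)
  then have "\<forall>k i j. mwp_christoffel b1 b2 k i j t = gamma k i j t"
    unfolding mwp_christoffel_def deriv_mwp_matrix[OF t] gamma_def forall_3
    using b1_nonzero[OF t] b2_nonzero[OF t]
    by (simp add: diag3_def sum_3 mwp_matrix_def power2_eq_square field_simps)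
  then show ?thesis by blast
qed

lemma gamma_has_real_derivative:
  assumes t: "t \<in> I"
  shows "(gamma k i j has_real_derivative gamma_deriv k i j t) (at t)"
proof -
  note b = b1_deriv[OF t] b1'_deriv[OF t] b2_deriv[OF t] b2'_deriv[OF t] b1_nonzero[OF t] b2_nonzero[OF t]
  have "((\<lambda>s. b1 s * b1' s) has_real_derivative (b1' t)\<^sup>2 + b1 t * b1'' t) (at t)"
       "((\<lambda>s. b2 s * b2' s) has_real_derivative (b2' t)\<^sup>2 + b2 t * b2'' t) (at t)"
       "((\<lambda>s. b1' s / b1 s) has_real_derivative (b1'' t * b1 t - (b1' t)\<^sup>2) / (b1 t)\<^sup>2) (at t)"
       "((\<lambda>s. b2' s / b2 s) has_real_derivative (b2'' t * b2 t - (b2' t)\<^sup>2) / (b2 t)\<^sup>2) (at t)"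
    using b by (auto intro!: derivative_eq_intros simp: power2_eq_square)
  then show ?thesis
    unfolding gamma_def[abs_def] gamma_deriv_def by auto
qed

lemma deriv_mwp_christoffel:
  "t \<in> I \<Longrightarrow> deriv (mwp_christoffel b1 b2 k i j) t = gamma_deriv k i j t"
  by (rule DERIV_imp_deriv, rule has_field_derivative_transform_within_open[OF gamma_has_real_derivative open_I])
     (auto simp: mwp_christoffel_eq_gamma)

definition ricci_matrix :: "real \<Rightarrow> real^3^3" where
  "ricci_matrix t = diag3 (- (b1'' t / b1 t + b2'' t / b2 t))
      ((b1 t)\<^sup>2 * (b1'' t / b1 t + b1' t * b2' t / (b1 t * b2 t)))
      ((b2 t)\<^sup>2 * (b2'' t / b2 t + b1' t * b2' t / (b1 t * b2 t)))"

lemma ricci_mwp_metric_eq_ricci_matrix: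
  assumes "p$1 \<in> I"
  shows "ricci (mwp_metric b1 b2) p i j = ricci_matrix (p$1) $ i $ j"
proof -
  note t = assms and nonzero = b1_nonzero[OF assms] b2_nonzero[OF assms]
  have "\<forall>i j. ricci (mwp_metric b1 b2) p i j = ricci_matrix (p$1) $ i $ j"
    unfolding ricci_mwp_metric deriv_mwp_christoffel[OF t] mwp_christoffel_eq_gamma[OF t] forall_3 sum_3
    using nonzero by (simp add: ricci_matrix_def gamma_def gamma_deriv_def diag3_def power2_eq_square field_simps)
  then show ?thesis by blast
qed

lemma einstein_on_mwp_metric_iff:
  "einstein_on {p. p$1 \<in> I} (mwp_metric b1 b2) lam \<longleftrightarrow>
    (\<forall>t\<in>I. b1'' t / b1 t + b2'' t / b2 t = lam
        \<and> b1'' t / b1 t + b1' t * b2' t / (b1 t * b2 t) = lam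
        \<and> b2'' t / b2 t + b1' t * b2' t / (b1 t * b2 t) = lam)" (is "_ \<longleftrightarrow> ?equations")
proof -
  have "einstein_on {p. p$1 \<in> I} (mwp_metric b1 b2) lam \<longleftrightarrow>
      (\<forall>t\<in>I. \<forall>i j. ricci_matrix t $ i $ j = lam * mwp_matrix b1 b2 t $ i $ j)"
    unfolding einstein_on_def
  proof
    assume "\<forall>p\<in>{p. p$1 \<in> I}. \<forall>i j. ricci (mwp_metric b1 b2) p i j = lam * mwp_metric b1 b2 p $ i $ j"
    then show "\<forall>t\<in>I. \<forall>i j. ricci_matrix t $ i $ j = lam * mwp_matrix b1 b2 t $ i $ j"
      using ricci_mwp_metric_eq_ricci_matrix[of "vec _"] by (simp add: mwp_metric_eq_mwp_matrix)
  qed (simp add: ricci_mwp_metric_eq_ricci_matrix mwp_metric_eq_mwp_matrix)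
  also have "\<dots> \<longleftrightarrow> ?equations"
  proof (intro ball_cong refl)
    fix t assume "t \<in> I"
    then show "(\<forall>i j. ricci_matrix t $ i $ j = lam * mwp_matrix b1 b2 t $ i $ j) \<longleftrightarrow>
      b1'' t / b1 t + b2'' t / b2 t = lam
        \<and> b1'' t / b1 t + b1' t * b2' t / (b1 t * b2 t) = lam
        \<and> b2'' t / b2 t + b1' t * b2' t / (b1 t * b2 t) = lam"
      using b1_nonzero b2_nonzero
      by (simp add: forall_3 ricci_matrix_def mwp_matrix_def diag3_def) argo
  qed
  finally show ?thesis .
qed

end

lemma einstein_on_mwp_metric_reparametrized_iff:
  fixes \<phi> N N' N'' :: "real \<Rightarrow> real"
  assumes "open I" and \<phi>_image: "\<phi> ` I = J"
    and \<phi>_deriv: "\<And>t. t \<in> I \<Longrightarrow> (\<phi> has_real_derivative N (\<phi> t)) (at t)"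
    and N_deriv: "\<And>r. r \<in> J \<Longrightarrow> (N has_real_derivative N' r) (at r)"
    and N'_deriv: "\<And>r. r \<in> J \<Longrightarrow> (N' has_real_derivative N'' r) (at r)"
    and N_nonzero: "\<And>r. r \<in> J \<Longrightarrow> N r \<noteq> 0"
    and J_nonzero: "\<And>r. r \<in> J \<Longrightarrow> r \<noteq> 0"
  shows "einstein_on {p. p$1 \<in> I} (mwp_metric (\<lambda>t. N (\<phi> t)) \<phi>) lam \<longleftrightarrow>
    (\<forall>r\<in>J. N'' r * N r + (N' r)\<^sup>2 + N' r * N r / r = lam \<and> 2 * (N' r * N r) / r = lam)"
proof -
  have \<phi>_in: "\<phi> t \<in> J" if "t \<in> I" for t
    using \<phi>_image that by blast
  have N\<phi>_deriv: "((\<lambda>t. N (\<phi> t)) has_real_derivative N' (\<phi> t) * N (\<phi> t)) (at t)"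
    and N'\<phi>_deriv: "((\<lambda>t. N' (\<phi> t)) has_real_derivative N'' (\<phi> t) * N (\<phi> t)) (at t)"
    if "t \<in> I" for t
    using DERIV_chain2[OF N_deriv[OF \<phi>_in[OF that]] \<phi>_deriv[OF that]]
      DERIV_chain2[OF N'_deriv[OF \<phi>_in[OF that]] \<phi>_deriv[OF that]] by auto
  interpret mwp_twice_differentiable I "\<lambda>t. N (\<phi> t)" \<phi>
    "\<lambda>t. N' (\<phi> t) * N (\<phi> t)" "\<lambda>t. N (\<phi> t)"
    "\<lambda>t. (N'' (\<phi> t) * N (\<phi> t) + (N' (\<phi> t))\<^sup>2) * N (\<phi> t)" "\<lambda>t. N' (\<phi> t) * N (\<phi> t)"
  proof
    show "open I" by fact
    show "N (\<phi> t) \<noteq> 0" "\<phi> t \<noteq> 0" if "t \<in> I" for t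
      using N_nonzero J_nonzero \<phi>_in[OF that] by auto
    show "(\<phi> has_real_derivative N (\<phi> t)) (at t)" if "t \<in> I" for t
      using \<phi>_deriv[OF that] .
    show "((\<lambda>t. N (\<phi> t)) has_real_derivative N' (\<phi> t) * N (\<phi> t)) (at t)" if "t \<in> I" for t
      by (fact N\<phi>_deriv[OF that])
    show "((\<lambda>t. N' (\<phi> t) * N (\<phi> t)) has_real_derivative
        (N'' (\<phi> t) * N (\<phi> t) + (N' (\<phi> t))\<^sup>2) * N (\<phi> t)) (at t)" if "t \<in> I" for t
      using DERIV_mult[OF N'\<phi>_deriv[OF that] N\<phi>_deriv[OF that]]
      by (simp add: power2_eq_square algebra_simps)
  qed
  have "einstein_on {p. p$1 \<in> I} (mwp_metric (\<lambda>t. N (\<phi> t)) \<phi>) lam \<longleftrightarrow>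
    (\<forall>t\<in>I. N'' (\<phi> t) * N (\<phi> t) + (N' (\<phi> t))\<^sup>2 + N' (\<phi> t) * N (\<phi> t) / \<phi> t = lam
      \<and> 2 * (N' (\<phi> t) * N (\<phi> t)) / \<phi> t = lam)"
    unfolding einstein_on_mwp_metric_iff
    by (intro ball_cong refl) (simp add: N_nonzero J_nonzero \<phi>_in mult.commute)
  then show ?thesis
    unfolding \<phi>_image[symmetric] by simp
qed

lemma derivative_eq_iff_eq_plus_const:
  fixes f g f' g' :: "real \<Rightarrow> real"
  assumes "is_interval J" "open J"
    and f_deriv: "\<And>r. r \<in> J \<Longrightarrow> (f has_real_derivative f' r) (at r)"
    and g_deriv: "\<And>r. r \<in> J \<Longrightarrow> (g has_real_derivative g' r) (at r)"
  shows "(\<forall>r\<in>J. f' r = g' r) \<longleftrightarrow> (\<exists>c. \<forall>r\<in>J. f r = g r + c)"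
proof
  assume "\<forall>r\<in>J. f' r = g' r"
  then have "((\<lambda>r. f r - g r) has_real_derivative 0) (at r within J)" if "r \<in> J" for r
    using DERIV_diff[OF f_deriv g_deriv, OF that that] that by (simp add: has_field_derivative_at_within)
  then obtain c where "\<forall>r\<in>J. f r - g r = c"
    using has_field_derivative_zero_constant[OF is_interval_convex_1[THEN iffD1, OF \<open>is_interval J\<close>]]
    by blast
  then show "\<exists>c. \<forall>r\<in>J. f r = g r + c" by (metis add.commute diff_eq_eq)
next
  assume "\<exists>c. \<forall>r\<in>J. f r = g r + c"
  then obtain c where c: "\<And>r. r \<in> J \<Longrightarrow> g r + c = f r" by metis
  show "\<forall>r\<in>J. f' r = g' r"
  proof
    fix r assume r: "r \<in> J"
    have "((\<lambda>r. g r + c) has_real_derivative g' r) (at r)"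
      using g_deriv[OF r] by (auto intro!: derivative_eq_intros)
    then have "(f has_real_derivative g' r) (at r)"
      by (rule has_field_derivative_transform_within_open[OF _ \<open>open J\<close> r c])
    then show "f' r = g' r" using f_deriv[OF r] DERIV_unique by blast
  qed
qed

lemma lapse_equations_iff:
  fixes N N' N'' :: "real \<Rightarrow> real"
  assumes J: "is_interval J" "open J"
    and N_deriv: "\<And>r. r \<in> J \<Longrightarrow> (N has_real_derivative N' r) (at r)"
    and N'_deriv: "\<And>r. r \<in> J \<Longrightarrow> (N' has_real_derivative N'' r) (at r)"
    and J_nonzero: "\<And>r. r \<in> J \<Longrightarrow> r \<noteq> 0"
  shows "(\<forall>r\<in>J. N'' r * N r + (N' r)\<^sup>2 + N' r * N r / r = lam \<and> 2 * (N' r * N r) / r = lam)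
    \<longleftrightarrow> (\<exists>c. \<forall>r\<in>J. (N r)\<^sup>2 = lam / 2 * r\<^sup>2 + c)"
proof -
  have NN'_deriv: "((\<lambda>r. N' r * N r) has_real_derivative N'' r * N r + (N' r)\<^sup>2) (at r)"
    if "r \<in> J" for r
    using DERIV_mult[OF N'_deriv[OF that] N_deriv[OF that]] by (simp add: power2_eq_square)
  have N_sq_deriv: "((\<lambda>r. (N r)\<^sup>2) has_real_derivative 2 * (N' r * N r)) (at r)"
    if "r \<in> J" for r
    using DERIV_mult[OF N_deriv[OF that] N_deriv[OF that]] by (simp add: power2_eq_square algebra_simps)
  have lin_deriv: "((\<lambda>r. lam / 2 * r) has_real_derivative lam / 2) (at r)" for r
    using DERIV_cmult[OF DERIV_ident, of "lam / 2"] by (simp only: mult_1_right)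
  have quad_deriv: "((\<lambda>r. lam / 2 * r\<^sup>2) has_real_derivative lam * r) (at r)" for r
    using DERIV_cmult[OF DERIV_pow[of 2 r], of "lam / 2"] by simp
  have "(\<forall>r\<in>J. N'' r * N r + (N' r)\<^sup>2 + N' r * N r / r = lam \<and> 2 * (N' r * N r) / r = lam)
      \<longleftrightarrow> (\<forall>r\<in>J. 2 * (N' r * N r) = lam * r)"
  proof
    assume "\<forall>r\<in>J. N'' r * N r + (N' r)\<^sup>2 + N' r * N r / r = lam \<and> 2 * (N' r * N r) / r = lam"
    then show "\<forall>r\<in>J. 2 * (N' r * N r) = lam * r"
      using J_nonzero by (metis nonzero_eq_divide_eq)
  next
    assume "\<forall>r\<in>J. 2 * (N' r * N r) = lam * r"
    then have NN': "\<forall>r\<in>J. N' r * N r = lam / 2 * r + 0" by (simp add: mult.commute)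
    \<comment> \<open>Differentiating the second equation gives (N N')' = lam / 2, which turns the first into the second.\<close>
    then have NN'': "\<forall>r\<in>J. N'' r * N r + (N' r)\<^sup>2 = lam / 2"
      using derivative_eq_iff_eq_plus_const[OF J NN'_deriv lin_deriv] by blast
    show "\<forall>r\<in>J. N'' r * N r + (N' r)\<^sup>2 + N' r * N r / r = lam \<and> 2 * (N' r * N r) / r = lam"
    proof
      fix r assume r: "r \<in> J"
      then have NN'_r: "N' r * N r = lam / 2 * r" and NN''_r: "N'' r * N r + (N' r)\<^sup>2 = lam / 2"
        using NN' NN'' by auto
      have "N' r * N r / r = lam / 2" "2 * (N' r * N r) / r = lam"
        using NN'_r J_nonzero[OF r] by (simp_all add: field_simps)
      with NN''_r show "N'' r * N r + (N' r)\<^sup>2 + N' r * N r / r = lam \<and> 2 * (N' r * N r) / r = lam"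
        by (intro conjI) linarith+
    qed
  qed
  also have "\<dots> \<longleftrightarrow> (\<exists>c. \<forall>r\<in>J. (N r)\<^sup>2 = lam / 2 * r\<^sup>2 + c)"
    using derivative_eq_iff_eq_plus_const[OF J N_sq_deriv quad_deriv] .
  finally show ?thesis .
qed

lemma smooth_on_has_real_derivative:
  assumes "smooth_on S f" and "x \<in> S"
  shows "((deriv ^^ k) f has_real_derivative (deriv ^^ Suc k) f x) (at x)"
  using assms unfolding smooth_on_def by (simp add: DERIV_deriv_iff_real_differentiable)

lemma signed_integral_has_real_derivative:
  fixes f :: "real \<Rightarrow> real"
  assumes J: "is_interval J" "open J" and cont: "continuous_on J f" and a: "a \<in> J" and r: "r \<in> J"
  shows "((\<lambda>u. signed_integral a u f) has_real_derivative f r) (at r)"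
proof -
  have "min a r \<in> J" "max a r \<in> J"
    using a r by (simp_all add: min_def max_def)
  obtain e1 where e1: "e1 > 0" "ball (min a r) e1 \<subseteq> J"
    using openE[OF J(2) \<open>min a r \<in> J\<close>] .
  obtain e2 where e2: "e2 > 0" "ball (max a r) e2 \<subseteq> J"
    using openE[OF J(2) \<open>max a r \<in> J\<close>] .
  define lo where "lo = min a r - e1 / 2"
  define hi where "hi = max a r + e2 / 2"
  have lohi: "lo < min a r" "max a r < hi"
    using e1 e2 unfolding lo_def hi_def by auto
  have "lo \<in> J" "hi \<in> J"
    using e1 e2 unfolding lo_def hi_def by (auto simp: dist_real_def subset_iff)
  then have "{lo..hi} \<subseteq> J"
    using J(1) unfolding is_interval_1 by (meson atLeastAtMost_iff subsetI)
  then have cont_lohi: "continuous_on {lo..hi} f"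
    by (rule continuous_on_subset[OF cont])
  have int: "f integrable_on {x..y}" if "lo \<le> x" "y \<le> hi" for x y
    using that by (intro integrable_continuous_real continuous_on_subset[OF cont_lohi]) auto
  have eq: "signed_integral a u f = integral {lo..u} f - integral {lo..a} f"
    if u: "u \<in> {lo<..<hi}" for u
  proof (cases "a \<le> u")
    case True
    have "integral {lo..a} f + integral {a..u} f = integral {lo..u} f"
      by (rule Henstock_Kurzweil_Integration.integral_combine) (use True u lohi int in auto)
    then show ?thesis using True by (simp add: signed_integral_def)
  next
    case False
    have "integral {lo..u} f + integral {u..a} f = integral {lo..a} f"
      by (rule Henstock_Kurzweil_Integration.integral_combine) (use False u lohi int in auto)
    then show ?thesis using False by (simp add: signed_integral_def)
  qed
  have "((\<lambda>u. integral {lo..u} f) has_real_derivative f r) (at r within {lo..hi})"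
    by (rule integral_has_real_derivative[OF cont_lohi]) (use lohi in auto)
  then have "((\<lambda>u. integral {lo..u} f) has_real_derivative f r) (at r)"
    using at_within_Icc_at[of lo r hi] lohi by auto
  then have "((\<lambda>u. integral {lo..u} f - integral {lo..a} f) has_real_derivative f r) (at r)"
    using DERIV_diff[OF _ DERIV_const[of "integral {lo..a} f" "at r"]] by simp
  then show ?thesis
    by (rule has_field_derivative_transform_within_open[of _ _ _ "{lo<..<hi}"]) (use lohi eq in auto)
qed

lemma deriv_pos_imp_strict_mono_on:
  fixes F F' :: "real \<Rightarrow> real"
  assumes "is_interval J"
    and F_deriv: "\<And>r. r \<in> J \<Longrightarrow> (F has_real_derivative F' r) (at r)"
    and F'_pos: "\<And>r. r \<in> J \<Longrightarrow> F' r > 0"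
  shows "strict_mono_on J F"
proof (rule strict_mono_onI)
  fix x y assume "x \<in> J" "y \<in> J" "x < y"
  show "F x < F y"
  proof (rule DERIV_pos_imp_increasing[OF \<open>x < y\<close>])
    fix z assume "x \<le> z" "z \<le> y"
    then have "z \<in> J"
      using \<open>x \<in> J\<close> \<open>y \<in> J\<close> \<open>is_interval J\<close> unfolding is_interval_1 by blast
    then show "\<exists>d. (F has_real_derivative d) (at z) \<and> d > 0"
      using F_deriv F'_pos by blast
  qed
qed

lemma inv_into_has_real_derivative:
  fixes F F' :: "real \<Rightarrow> real"
  assumes "open J" and "inj_on F J"
    and F_deriv: "\<And>r. r \<in> J \<Longrightarrow> (F has_real_derivative F' r) (at r)"
    and t: "t \<in> F ` J" and "F' (inv_into J F t) \<noteq> 0"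
  shows "(inv_into J F has_real_derivative inverse (F' (inv_into J F t))) (at t)"
proof -
  have "continuous_on J F"
    using F_deriv by (meson DERIV_isCont continuous_at_imp_continuous_on)
  then have "(inv_into J F has_real_derivative inverse (F' (inv_into J F t))) (at (F (inv_into J F t)))"
    using has_field_derivative_inverse_strong[OF F_deriv[OF inv_into_into[OF t]]] assms inv_into_into[OF t]
    by simp
  then show ?thesis
    using f_inv_into_f[OF t] by simp
qed

lemma signed_integral_reciprocal_invertible:
  fixes N :: "real \<Rightarrow> real"
  assumes J: "is_interval J" "open J" and "continuous_on J N" and N_pos: "\<And>r. r \<in> J \<Longrightarrow> N r > 0"
    and "a \<in> J"
  defines "F \<equiv> \<lambda>r. signed_integral a r (\<lambda>\<mu>. 1 / N \<mu>)"
  shows "inj_on F J" and "open (F ` J)"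
    and "\<And>t. t \<in> F ` J \<Longrightarrow> (inv_into J F has_real_derivative N (inv_into J F t)) (at t)"
proof -
  have "continuous_on J (\<lambda>\<mu>. 1 / N \<mu>)"
    using \<open>continuous_on J N\<close> N_pos by (intro continuous_on_divide continuous_on_const) force+
  then have F_deriv: "(F has_real_derivative 1 / N r) (at r)" if "r \<in> J" for r
    unfolding F_def by (rule signed_integral_has_real_derivative[OF J _ \<open>a \<in> J\<close> that])
  show inj: "inj_on F J"
    using deriv_pos_imp_strict_mono_on[OF J(1) F_deriv] N_pos by (simp add: strict_mono_on_imp_inj_on)
  have "continuous_on J F"
    using F_deriv by (meson DERIV_isCont continuous_at_imp_continuous_on)
  then show "open (F ` J)"
    by (rule invariance_of_domain[OF _ J(2) inj])
  show "(inv_into J F has_real_derivative N (inv_into J F t)) (at t)" if "t \<in> F ` J" for t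
    using inv_into_has_real_derivative[OF J(2) inj F_deriv that] N_pos[OF inv_into_into[OF that]]
    by simp
qed

theorem proposition6p1:
  fixes N :: "real \<Rightarrow> real" and J :: "real set" and a lam :: real
    and F Finv b1 b2 :: "real \<Rightarrow> real" and I :: "real set"
  assumes J_interval: "is_interval J" "open J" "J \<noteq> {}"
    and N_smooth: "smooth_on J N"
    and N_pos: "\<forall>r\<in>J. N r > 0"
    and a_in: "a \<in> J"
    and F_def: "F = (\<lambda>r. signed_integral a r (\<lambda>\<mu>. 1 / N \<mu>))"
    and I_def: "I = F ` J"
    and Finv_def: "Finv = inv_into J F"
    and b1_def: "b1 = (\<lambda>t. N (Finv t))"
    and b2_def: "b2 = (\<lambda>t. Finv t)"
    and b2_pos: "\<forall>t\<in>I. b2 t > 0"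
  shows "einstein_on {p. p$1 \<in> I} (mwp_metric b1 b2) lam
         \<longleftrightarrow> (\<exists>c2. \<forall>r\<in>J. (N r)\<^sup>2 = lam / 2 * r\<^sup>2 + c2)"
proof -
  have N_deriv: "(N has_real_derivative deriv N r) (at r)"
    and N'_deriv: "(deriv N has_real_derivative deriv (deriv N) r) (at r)" if "r \<in> J" for r
    using smooth_on_has_real_derivative[OF N_smooth that, of 0]
      smooth_on_has_real_derivative[OF N_smooth that, of 1] by simp_all
  have "continuous_on J N"
    using N_deriv by (meson DERIV_isCont continuous_at_imp_continuous_on)
  then have inj: "inj_on F J" and "open I"
    and Finv_deriv: "\<And>t. t \<in> I \<Longrightarrow> (Finv has_real_derivative N (Finv t)) (at t)"
    using signed_integral_reciprocal_invertible[OF J_interval(1,2) _ _ a_in] N_pos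
    unfolding F_def I_def Finv_def by auto
  have "Finv ` I = J"
    unfolding Finv_def I_def using inj by simp
  have J_nonzero: "r \<noteq> 0" if "r \<in> J" for r
    using b2_pos inj that unfolding I_def b2_def Finv_def by force
  have "einstein_on {p. p$1 \<in> I} (mwp_metric b1 b2) lam \<longleftrightarrow>
    (\<forall>r\<in>J. deriv (deriv N) r * N r + (deriv N r)\<^sup>2 + deriv N r * N r / r = lam
      \<and> 2 * (deriv N r * N r) / r = lam)"
    unfolding b1_def b2_def using N_pos
    by (intro einstein_on_mwp_metric_reparametrized_iff[OF \<open>open I\<close> \<open>Finv ` I = J\<close> Finv_deriv
          N_deriv N'_deriv _ J_nonzero]) auto
  also have "\<dots> \<longleftrightarrow> (\<exists>c2. \<forall>r\<in>J. (N r)\<^sup>2 = lam / 2 * r\<^sup>2 + c2)"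
    by (rule lapse_equations_iff[OF J_interval(1,2) N_deriv N'_deriv J_nonzero])
  finally show ?thesis .
qed

end
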